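(* Consider the ideal onion-routing functionality $\mathcal{F}$ and the adversary class $\mathcal{C}$ described in the context. Then $\mathcal{F}$ achieves Message Unobservability $M\overline{O}$ under corruption option $X_{e}$ against adversaries restricted by $\mathcal{C}$.
   Context: Ideal functionality $\mathcal{F}$ (onion routing over parties/relays $P_i$, with a set $\mathrm{Bad}$ of statically corrupted parties and a maximal path length $N$). An onion is a tuple $O=(sid,P_s,P_r,m,n,\mathcal{P},i)$ with session id $sid$, sender $P_s$, receiver $P_r$, message $m$, path length $n$, path $\mathcal{P}=(P_{o_1},\dots,P_{o_n})$ (with $P_{o_0}=P_s$, $P_{o_{n+1}}=P_r$), and $i$ the position reached. $\mathcal{F}$ keeps a list $L$ and a buffer $B_i$ for each honest $P_i$. - On Process_New_Onion$(P_r,m,n,\mathcal{P})$ from $P_s$: if $|\mathcal{P}|>N$ reject; else pick a random $sid$, set $O=(sid,P_s,P_r,m,n,\mathcal{P},0)$; if $P_s\in\mathrm{Bad}$ send to the adversary "start belongs to onion from $P_s$ with $sid,P_r,m,n,\mathcal{P}$"; run Process_Next_Step$(O)$. - Process_Next_Step$(O)$ with current position $i$: if all $P_{o_j}$, $j>i$ (including $P_r$), are corrupted, send the adversary "Onion from $P_{o_i}$ with message $m$ for $P_r$ routed through $(P_{o_{i+1}},\dots,P_{o_n})$" (plus, if $P_s\in\mathrm{Bad}$, all onion information). Otherwise let $j>i$ be minimal with $P_{o_j}$ honest, choose a fresh random temporary id $temp$, send the adversary "Onion $temp$ from $P_{o_i}$ routed through $(P_{o_{i+1}},\dots,P_{o_{j-1}})$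 to $P_{o_j}$" (plus, if $P_s\in\mathrm{Bad}$, "$temp$ belongs to onion from $P_s$ with $sid,P_r,m,n,\mathcal{P}$"), and add $(temp,O,j)$ to $L$. - On Deliver_Message$(temp)$ from the adversary: if $(temp,O,j)\in L$, set the position of $O$ to $j$; if $j<n+1$, choose a fresh random $temp'$, send "$temp'$ received" to $P_{o_j}$ and store $(temp',O)$ in $B_{o_j}$; if $j=n+1$ and $m\neq\perp$ send "Message $m$ received" to $P_r$. - On Forward_Onion$(temp')$ from $P_i$: if $(temp',O)\in B_i$, remove it and run Process_Next_Step$(O)$. Framework of Kuhn et al.: a communication is $r=(u,u',m,aux)$ (sender, receiver, message, auxiliary information containing the path). Communications processed together form a batch. The adversary repeatedly submits pairs of batches $(\underline{r}_0,\underline{r}_1)$; the challenger checks validity for the notion and corruption option and (with a bit $b$ chosen uniformly once) runs the system on $\underline{r}_b$, giving the adversary its observations; finally the adversary guesses $b$. A notion is achieved if every PPT adversary has at most negligible advantage over $1/2$. Writing $r_{b_j}=(u_{b_j},u'_{b_j},m_{b_j},aux_{b_j})$, $j=1,\dots,l$: the pair is valid for $M\overline{O}$ iff $r_{1_j}=(u_{0_j},u'_{0_j},m_{1_j},aux_{0_j})$ for all $j$. Corruption option $X_{e}$ (with $\hat U$ the set of corrupted users, whose internal state is revealed): for every $\hat u\in\hat U$, if $r_{0_i}$ has sender $\hat u$ and message $m$ then so does $r_{1_i}$, and if $r_{0_i}$ has receiver $\hat u$ and message $m$ then so does $r_{1_i}$. Adversary class $\mathcal{C}$: for communications of honest senders,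 the adversary-chosen path is replaced by a random path of valid length, chosen such that all these paths share at least one common honest relay; all outputs of $\mathcal{F}$ for communications processed together are shuffled before being given to the adversary; the adversary may not delay or drop onions; duplicate Deliver_Message requests are dropped. *)

theory Defs
  imports "HOL-Probability.Probability"
begin

text \<open>A communication r = (sender, receiver, message, aux); aux is the path.
  Messages are of type 'm option, None playing the role of the empty message.\<close>
type_synonym ('p, 'm) comm = "'p \<times> 'p \<times> 'm option \<times> 'p list"
type_synonym ('p, 'm) batch = "('p, 'm) comm list"

text \<open>Full onion information: (sid, P_s, P_r, m, n, path).\<close>
type_synonym ('p, 'm, 'i) info = "'i \<times> 'p \<times> 'p \<times> 'm option \<times> nat \<times> 'p list"

datatype ('p, 'm, 'i) fout =
    StartOut "('p, 'm, 'i) info"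
      \<comment> \<open>start belongs to onion from P_s with sid, P_r, m, n, path\<close>
  | HopOut 'i 'p "'p list" 'p
      \<comment> \<open>Onion temp from P_oi routed through (..) to P_oj\<close>
  | BelongsOut 'i "('p, 'm, 'i) info"
      \<comment> \<open>temp belongs to onion from P_s with sid, P_r, m, n, path\<close>
  | FinalOut 'p "'m option" 'p "'p list" "('p, 'm, 'i) info option"
      \<comment> \<open>Onion from P_oi with message m for P_r routed through (..), plus info if P_s is corrupted\<close>

definition fresh :: "'i::finite set \<Rightarrow> ('i \<times> 'i set) pmf" where
  "fresh U = map_pmf (\<lambda>t. (t, insert t U))
      (if UNIV - U = {} then pmf_of_set UNIV else pmf_of_set (UNIV - U))"

text \<open>The deterministic skeleton of repeated Process_Next_Step calls, where every onion
  is delivered by the adversary (no delay / drop) and honest parties forward it.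
  Hop a bs c lst: onion from a routed through bs to the honest party c, last = (c is at
  position n+1). Fin a bs: all remaining parties corrupted.\<close>
datatype 'p step = Hop 'p "'p list" 'p bool | Fin 'p "'p list"

fun walk :: "'p set \<Rightarrow> 'p \<Rightarrow> 'p list \<Rightarrow> 'p list \<Rightarrow> 'p step list" where
  "walk B cur acc [] = [Fin cur (butlast (rev acc))]"
| "walk B cur acc (x # xs) =
     (if x \<in> B then walk B cur (x # acc) xs
      else Hop cur (rev acc) x (xs = []) # (if xs = [] then [] else walk B x [] xs))"

primrec steps_out :: "('p, 'm, 'i) info option \<Rightarrow> 'm option \<Rightarrow> 'p \<Rightarrow> 'p step list
    \<Rightarrow> 'i::finite set \<Rightarrow> (('p, 'm, 'i) fout list \<times> 'i set) pmf" where
  "steps_out oi m r [] U = return_pmf ([], U)"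
| "steps_out oi m r (st # rest) U =
     (case st of
        Hop a bs c lst \<Rightarrow>
          bind_pmf (fresh U) (\<lambda>(t, U1).
          bind_pmf (if lst then return_pmf U1 else map_pmf snd (fresh U1)) (\<lambda>U2.
          bind_pmf (steps_out oi m r rest U2) (\<lambda>(os, U3).
          return_pmf (HopOut t a bs c #
             (case oi of None \<Rightarrow> [] | Some x \<Rightarrow> [BelongsOut t x]) @ os, U3))))
      | Fin a bs \<Rightarrow>
          bind_pmf (steps_out oi m r rest U) (\<lambda>(os, U1).
          return_pmf (FinalOut a m r bs oi # os, U1)))"

text \<open>Process_New_Onion (with the path already fixed).\<close>
definition process_comm :: "'p set \<Rightarrow> nat \<Rightarrow> ('p, 'm) comm \<Rightarrow> 'i::finite set
    \<Rightarrow> (('p, 'm, 'i) fout list \<times> 'i set) pmf" where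
  "process_comm B N c U = (case c of (s, r, m, pth) \<Rightarrow>
     if length pth > N then return_pmf ([], U)
     else bind_pmf (fresh U) (\<lambda>(sid, U1).
       (let oi = (if s \<in> B then Some (sid, s, r, m, length pth, pth) else None) in
        bind_pmf (steps_out oi m r (walk B s [] (pth @ [r])) U1) (\<lambda>(os, U2).
        return_pmf ((case oi of None \<Rightarrow> [] | Some x \<Rightarrow> [StartOut x]) @ os, U2)))))"

primrec process_list :: "'p set \<Rightarrow> nat \<Rightarrow> ('p, 'm) batch \<Rightarrow> 'i::finite set
    \<Rightarrow> (('p, 'm, 'i) fout list \<times> 'i set) pmf" where
  "process_list B N [] U = return_pmf ([], U)"
| "process_list B N (c # cs) U =
     bind_pmf (process_comm B N c U) (\<lambda>(os1, U1).
     bind_pmf (process_list B N cs U1) (\<lambda>(os2, U2).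
     return_pmf (os1 @ os2, U2)))"

fun assign_paths :: "'p set \<Rightarrow> ('p, 'm) batch \<Rightarrow> 'p list list \<Rightarrow> ('p, 'm) batch" where
  "assign_paths B [] ps = []"
| "assign_paths B ((s, r, m, a) # cs) ps =
     (if s \<in> B then (s, r, m, a) # assign_paths B cs ps
      else (case ps of [] \<Rightarrow> (s, r, m, a) # assign_paths B cs []
                     | p # ps' \<Rightarrow> (s, r, m, p) # assign_paths B cs ps'))"

text \<open>Requirements of class C on the random path choice: given the (sender, receiver)
  pairs of the honest-sender communications of a batch, it returns one path of valid
  length per communication, all sharing a common honest relay.\<close>
definition PathSel_ok :: "'p set \<Rightarrow> nat \<Rightarrow> (('p \<times> 'p) list \<Rightarrow> 'p list list pmf) \<Rightarrow> bool" where
  "PathSel_ok B N PS \<longleftrightarrow> (\<forall>hs. \<forall>ps \<in> set_pmf (PS hs).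
      length ps = length hs \<and> (\<forall>p \<in> set ps. length p \<le> N) \<and>
      (hs \<noteq> [] \<longrightarrow> (\<exists>h. h \<notin> B \<and> (\<forall>p \<in> set ps. h \<in> set p))))"

text \<open>Running the system (F under class C) on one batch: random paths for honest senders,
  all onions processed and delivered, all outputs shuffled.\<close>
definition run_batch :: "'p set \<Rightarrow> nat \<Rightarrow> (('p \<times> 'p) list \<Rightarrow> 'p list list pmf)
    \<Rightarrow> ('p, 'm) batch \<Rightarrow> 'i::finite set \<Rightarrow> (('p, 'm, 'i) fout list \<times> 'i set) pmf" where
  "run_batch B N PS bt U =
     bind_pmf (PS (map (\<lambda>(s, r, m, a). (s, r)) (filter (\<lambda>c. fst c \<notin> B) bt))) (\<lambda>ps.
     bind_pmf (process_list B N (assign_paths B bt ps) U) (\<lambda>(os, U1).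
     bind_pmf (pmf_of_set {xs. mset xs = mset os}) (\<lambda>obs.
     return_pmf (obs, U1))))"

definition valid_MObar :: "('p, 'm) batch \<Rightarrow> ('p, 'm) batch \<Rightarrow> bool" where
  "valid_MObar r0 r1 \<longleftrightarrow> length r0 = length r1 \<and>
     (\<forall>j < length r0. case r0 ! j of (u0, v0, m0, a0) \<Rightarrow> case r1 ! j of (u1, v1, m1, a1) \<Rightarrow>
        u1 = u0 \<and> v1 = v0 \<and> a1 = a0)"

definition valid_Xe :: "'p set \<Rightarrow> ('p, 'm) batch \<Rightarrow> ('p, 'm) batch \<Rightarrow> bool" where
  "valid_Xe Bad r0 r1 \<longleftrightarrow> length r0 = length r1 \<and>
     (\<forall>u \<in> Bad. \<forall>i < length r0. case r0 ! i of (u0, v0, m0, a0) \<Rightarrow> case r1 ! i of (u1, v1, m1, a1) \<Rightarrow>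
        (u0 = u \<longrightarrow> u1 = u \<and> m1 = m0) \<and> (v0 = u \<longrightarrow> v1 = u \<and> m1 = m0))"

primrec rounds :: "'p set \<Rightarrow> nat \<Rightarrow> (('p \<times> 'p) list \<Rightarrow> 'p list list pmf) \<Rightarrow> nat
    \<Rightarrow> ('s \<Rightarrow> ((('p, 'm) batch \<times> ('p, 'm) batch) \<times> 's) pmf)
    \<Rightarrow> ('s \<Rightarrow> ('p, 'm, 'i) fout list option \<Rightarrow> 's)
    \<Rightarrow> bool \<Rightarrow> 's \<Rightarrow> 'i::finite set \<Rightarrow> ('s \<times> 'i set) pmf" where
  "rounds B N PS 0 ch upd b s U = return_pmf (s, U)"
| "rounds B N PS (Suc q) ch upd b s U =
     bind_pmf (ch s) (\<lambda>((r0, r1), s1).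
       if valid_MObar r0 r1 \<and> valid_Xe B r0 r1 then
         bind_pmf (run_batch B N PS (if b then r1 else r0) U) (\<lambda>(obs, U1).
         rounds B N PS q ch upd b (upd s1 (Some obs)) U1)
       else rounds B N PS q ch upd b (upd s1 None) U)"

definition game :: "'p set \<Rightarrow> nat \<Rightarrow> (('p \<times> 'p) list \<Rightarrow> 'p list list pmf) \<Rightarrow> nat
    \<Rightarrow> 's pmf
    \<Rightarrow> ('s \<Rightarrow> ((('p, 'm) batch \<times> ('p, 'm) batch) \<times> 's) pmf)
    \<Rightarrow> ('s \<Rightarrow> ('p, 'm, 'i::finite) fout list option \<Rightarrow> 's)
    \<Rightarrow> ('s \<Rightarrow> bool pmf) \<Rightarrow> bool pmf" where
  "game B N PS q init ch upd guess =
     bind_pmf (bernoulli_pmf (1/2)) (\<lambda>b.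
     bind_pmf init (\<lambda>s.
     bind_pmf (rounds B N PS q ch upd b s ({} :: 'i set)) (\<lambda>(s', U).
     bind_pmf (guess s') (\<lambda>g. return_pmf (g = b)))))"

definition advantage :: "'p set \<Rightarrow> nat \<Rightarrow> (('p \<times> 'p) list \<Rightarrow> 'p list list pmf) \<Rightarrow> nat
    \<Rightarrow> 's pmf
    \<Rightarrow> ('s \<Rightarrow> ((('p, 'm) batch \<times> ('p, 'm) batch) \<times> 's) pmf)
    \<Rightarrow> ('s \<Rightarrow> ('p, 'm, 'i::finite) fout list option \<Rightarrow> 's)
    \<Rightarrow> ('s \<Rightarrow> bool pmf) \<Rightarrow> real" where
  "advantage B N PS q init ch upd guess =
     \<bar>measure_pmf.prob (game B N PS q init ch upd guess) {True} - 1/2\<bar>"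

definition negligible :: "(nat \<Rightarrow> real) \<Rightarrow> bool" where
  "negligible f \<longleftrightarrow> (\<forall>c::nat. eventually (\<lambda>k. \<bar>f k\<bar> < 1 / real k ^ c) at_top)"

end

theory Submission
  imports Defs
begin

text \<open>The adversary sees a message only in a final output (all remaining parties, the
  receiver included, are corrupted) or in the onion information leaked for a corrupted
  sender. For a communication between honest parties the walk therefore consists of hops
  only, and the outputs of \<open>\<F>\<close> do not depend on its message. Option \<open>X\<^sub>e\<close> fixes the
  messages of all other communications, so both batches of a valid pair induce the same
  output distribution, the view of the adversary is independent of the challenge bit, and
  its advantage is exactly zero.\<close>

definition differ_only_in_honest_msg :: "'p set \<Rightarrow> ('p, 'm) comm \<Rightarrow> ('p, 'm) comm \<Rightarrow> bool" where
  "differ_only_in_honest_msg B c0 c1 \<longleftrightarrow> (case c0 of (s, r, m, p) \<Rightarrow> case c1 of (s', r', m', p') \<Rightarrow>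
     s' = s \<and> r' = r \<and> p' = p \<and> (s \<in> B \<or> r \<in> B \<longrightarrow> m' = m))"

lemma walk_only_Hop:
  assumes "xs \<noteq> []" and "last xs \<notin> B"
  shows "\<forall>st \<in> set (walk B cur acc xs). \<exists>a bs c l. st = Hop a bs c l"
  using assms
proof (induction B cur acc xs rule: walk.induct)
  case (1 B cur acc)
  then show ?case by simp
next
  case (2 B cur acc x xs)
  then show ?case
    by (cases "x \<in> B") (auto split: if_splits)
qed

lemma steps_out_only_Hop_msg_irrelevant:
  assumes "\<forall>st \<in> set sts. \<exists>a bs c l. st = Hop a bs c l"
  shows "steps_out None m r sts U = steps_out None m' r sts U"
  using assms
proof (induction sts arbitrary: U)
  case Nil
  then show ?case by simp
next
  case (Cons st sts)
  then obtain a bs c l where "st = Hop a bs c l" by auto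
  with Cons show ?case by simp
qed

lemma process_comm_cong:
  assumes "differ_only_in_honest_msg B c0 c1"
  shows "process_comm B N c0 U = process_comm B N c1 U"
proof -
  obtain s r m p m' where c0: "c0 = (s, r, m, p)" and c1: "c1 = (s, r, m', p)"
    and corrupt_msg: "s \<in> B \<or> r \<in> B \<longrightarrow> m' = m"
    using assms by (cases c0; cases c1) (auto simp: differ_only_in_honest_msg_def)
  show ?thesis
  proof (cases "s \<in> B \<or> r \<in> B")
    case True
    with corrupt_msg show ?thesis by (simp add: c0 c1)
  next
    case False
    then have "\<forall>st \<in> set (walk B s [] (p @ [r])). \<exists>a bs c l. st = Hop a bs c l"
      by (intro walk_only_Hop) auto
    then have msg_irrelevant:
      "steps_out None m r (walk B s [] (p @ [r])) U' = steps_out None m' r (walk B s [] (p @ [r])) U'" for U'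
      by (rule steps_out_only_Hop_msg_irrelevant)
    from False show ?thesis by (simp add: c0 c1 process_comm_def msg_irrelevant)
  qed
qed

lemma process_list_cong:
  "list_all2 (differ_only_in_honest_msg B) bt0 bt1 \<Longrightarrow> process_list B N bt0 U = process_list B N bt1 U"
  by (induction bt0 bt1 arbitrary: U rule: list_all2_induct) (simp_all add: process_comm_cong)

lemma assign_paths_differ_only_in_honest_msg:
  "list_all2 (differ_only_in_honest_msg B) bt0 bt1 \<Longrightarrow>
   list_all2 (differ_only_in_honest_msg B) (assign_paths B bt0 ps) (assign_paths B bt1 ps)"
proof (induction bt0 bt1 arbitrary: ps rule: list_all2_induct)
  case Nil
  then show ?case by simp
next
  case (Cons c0 bt0 c1 bt1)
  obtain s r m p m' where "c0 = (s, r, m, p)" "c1 = (s, r, m', p)" "s \<in> B \<or> r \<in> B \<longrightarrow> m' = m"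
    using Cons.hyps(1) by (cases c0; cases c1) (auto simp: differ_only_in_honest_msg_def)
  with Cons.IH show ?case
    by (cases ps) (auto simp: differ_only_in_honest_msg_def)
qed

lemma honest_sender_pairs_eq:
  "list_all2 (differ_only_in_honest_msg B) bt0 bt1 \<Longrightarrow>
   map (\<lambda>(s, r, m, a). (s, r)) (filter (\<lambda>c. fst c \<notin> B) bt0) =
   map (\<lambda>(s, r, m, a). (s, r)) (filter (\<lambda>c. fst c \<notin> B) bt1)"
  by (induction bt0 bt1 rule: list_all2_induct) (auto simp: differ_only_in_honest_msg_def)

lemma run_batch_cong:
  assumes "list_all2 (differ_only_in_honest_msg B) bt0 bt1"
  shows "run_batch B N PS bt0 U = run_batch B N PS bt1 U"
  unfolding run_batch_def honest_sender_pairs_eq[OF assms]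
  by (simp add: process_list_cong[OF assign_paths_differ_only_in_honest_msg[OF assms]])

lemma valid_MObar_Xe_imp_differ_only_in_honest_msg:
  assumes "valid_MObar r0 r1" and "valid_Xe B r0 r1"
  shows "list_all2 (differ_only_in_honest_msg B) r0 r1"
  unfolding list_all2_conv_all_nth
proof (intro conjI allI impI)
  show "length r0 = length r1"
    using assms(1) by (simp add: valid_MObar_def)
next
  fix i assume i: "i < length r0"
  obtain s r m p s' r' m' p' where c0: "r0 ! i = (s, r, m, p)" and c1: "r1 ! i = (s', r', m', p')"
    by (cases "r0 ! i"; cases "r1 ! i") auto
  have "s' = s" "r' = r" "p' = p"
    using assms(1) i by (auto simp: valid_MObar_def c0 c1)
  moreover have "m' = m" if "u \<in> B" and "u = s \<or> u = r" for u
    using assms(2) i that unfolding valid_Xe_def by (fastforce simp: c0 c1)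
  ultimately show "differ_only_in_honest_msg B (r0 ! i) (r1 ! i)"
    by (auto simp: differ_only_in_honest_msg_def c0 c1)
qed

lemma rounds_challenge_bit_irrelevant:
  "rounds B N PS q ch upd True s U = rounds B N PS q ch upd False s U"
proof (induction q arbitrary: s U)
  case 0
  then show ?case by simp
next
  case (Suc q)
  have "run_batch B N PS r1 U = run_batch B N PS r0 U"
    if "valid_MObar r0 r1" and "valid_Xe B r0 r1" for r0 r1
    using run_batch_cong[OF valid_MObar_Xe_imp_differ_only_in_honest_msg[OF that]] by (rule sym)
  then show ?case
    by (auto intro!: bind_pmf_cong simp: Suc.IH split: prod.splits)
qed

lemma prob_guess_fair_coin:
  fixes D :: "bool pmf"
  shows "measure_pmf.prob (bind_pmf (bernoulli_pmf (1/2)) (\<lambda>b. map_pmf (\<lambda>g. g = b) D)) {True} = 1/2"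
proof -
  have "sum (pmf D) UNIV = 1"
    by (rule sum_pmf_eq_1) auto
  then have "pmf D True + pmf D False = 1"
    by (simp add: UNIV_bool)
  then show ?thesis
    by (simp add: measure_pmf_single pmf_bind pmf_map vimage_def algebra_simps)
qed

lemma game_win_prob_eq_half:
  "measure_pmf.prob (game B N PS q init ch upd guess) {True} = 1/2"
proof -
  define D where "D = bind_pmf init (\<lambda>s. bind_pmf (rounds B N PS q ch upd False s {}) (\<lambda>(s', U). guess s'))"
  have "game B N PS q init ch upd guess = bind_pmf (bernoulli_pmf (1/2)) (\<lambda>b. map_pmf (\<lambda>g. g = b) D)"
    unfolding game_def D_def map_pmf_def
    by (intro bind_pmf_cong refl, case_tac x)
       (simp_all add: rounds_challenge_bit_irrelevant bind_assoc_pmf bind_return_pmf case_prod_unfold)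
  then show ?thesis
    by (simp add: prob_guess_fair_coin)
qed

lemma advantage_eq_0: "advantage B N PS q init ch upd guess = 0"
  by (simp add: advantage_def game_win_prob_eq_half)

lemma negligible_zero: "negligible (\<lambda>_. 0)"
  unfolding negligible_def
proof
  fix c :: nat
  show "\<forall>\<^sub>F k in at_top. \<bar>0 :: real\<bar> < 1 / real k ^ c"
    using eventually_ge_at_top[of "1::nat"] by eventually_elim simp
qed

theorem lemma1:
  fixes Bad :: "'p set" and N :: nat
    and PathSel :: "('p \<times> 'p) list \<Rightarrow> 'p list list pmf"
    and q :: "nat \<Rightarrow> nat"
    and A_init :: "nat \<Rightarrow> 's pmf"
    and A_choose :: "nat \<Rightarrow> 's \<Rightarrow> ((('p, 'm) batch \<times> ('p, 'm) batch) \<times> 's) pmf"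
    and A_update :: "nat \<Rightarrow> 's \<Rightarrow> ('p, 'm, 'i::finite) fout list option \<Rightarrow> 's"
    and A_guess :: "nat \<Rightarrow> 's \<Rightarrow> bool pmf"
  assumes "PathSel_ok Bad N PathSel"
  shows "negligible (\<lambda>k. advantage Bad N PathSel (q k) (A_init k) (A_choose k) (A_update k) (A_guess k))"
  by (simp add: advantage_eq_0 negligible_zero)

end
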